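(* For every non-empty finite binary word $w$, the vanishing order satisfies $n_\epsilon(w) \le 2\lfloor \log_2 |w| \rfloor + 2$, where $|w|$ is the length of $w$.
   Context: Binary words are finite or infinite sequences over $\{0,1\}$; $\epsilon$ denotes the empty word. Define the map $\rho$ on binary words as follows: for $b=b_1b_2\dots$, $\rho(b)$ is obtained from $b$ by deleting every digit $b_n=0$ and replacing every digit $b_n=1$ by $0$ if $n$ is odd and by $1$ if $n$ is even (positions are counted in the original word $b$). For a finite binary word $w$, its vanishing order is $n_\epsilon(w)=\min\{k>0 : \rho^k(w)=\epsilon\}$, where $\rho^k$ is the $k$-th iterate of $\rho$. *)

theory Defs
  imports Complex_Main
begin

(* Binary words as lists of booleans: True = digit 1, False = digit 0.
   rho_from p w: apply the rule to w whose first letter sits at a position of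
   parity p in the original word (p = True means odd position). *)
fun rho_from :: "bool \<Rightarrow> bool list \<Rightarrow> bool list" where
  "rho_from p [] = []"
| "rho_from p (b # bs) =
     (if b then (\<not> p) # rho_from (\<not> p) bs else rho_from (\<not> p) bs)"

(* positions are counted from 1, so the first digit is at an odd position:
   a 1 at an odd position becomes 0 (False), at an even position becomes 1 (True) *)
definition rho :: "bool list \<Rightarrow> bool list" where
  "rho w = rho_from True w"

definition vanishing_order :: "bool list \<Rightarrow> nat" where
  "vanishing_order w = (LEAST k. 0 < k \<and> (rho ^^ k) w = [])"

end

theory Submission
  imports Defs
begin

text \<open>After two steps of \<open>\<rho>\<close> only the 1s that came from 1s at even positions survive,
  so \<open>\<rho>\<^sup>2\<close> at least halves the length. Hence \<open>\<rho>\<^sup>2\<^sup>k(w) = \<epsilon>\<close> as soon as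
  \<open>|w| < 2\<^sup>k\<close>, and \<open>k = \<lfloor>log\<^sub>2 |w|\<rfloor> + 1\<close> is the least such \<open>k\<close>.\<close>

lemma length_rho_from_rho_from_le:
  "length (rho_from q (rho_from p w)) \<le> (if p then length w div 2 else (length w + 1) div 2)"
proof (induction w arbitrary: p q)
  case Nil
  then show ?case by simp
next
  case (Cons b bs)
  have "length (rho_from q' (rho_from (\<not> p) bs))
          \<le> (if \<not> p then length bs div 2 else (length bs + 1) div 2)" for q'
    using Cons.IH .
  then show ?case by (cases b; cases p; auto intro: le_SucI)
qed

lemma length_rho_rho_le: "length (rho (rho w)) \<le> length w div 2"
  using length_rho_from_rho_from_le[of True True w] by (simp add: rho_def)

lemma length_funpow_rho_le: "length ((rho ^^ (2 * k)) w) \<le> length w div 2 ^ k"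
proof (induction k)
  case 0
  then show ?case by simp
next
  case (Suc k)
  have "(rho ^^ (2 * Suc k)) w = rho (rho ((rho ^^ (2 * k)) w))"
    by (simp add: funpow_swap1)
  then have "length ((rho ^^ (2 * Suc k)) w) \<le> length ((rho ^^ (2 * k)) w) div 2"
    using length_rho_rho_le by simp
  also have "\<dots> \<le> length w div 2 ^ k div 2"
    using Suc.IH by (rule div_le_mono)
  also have "\<dots> = length w div 2 ^ Suc k"
    by (metis div_mult2_eq power_Suc2)
  finally show ?case .
qed

lemma funpow_rho_eq_Nil_if_length_less:
  assumes "length w < 2 ^ k"
  shows "(rho ^^ (2 * k)) w = []"
  using length_funpow_rho_le[of k w] assms by simp

lemma vanishing_order_le:
  assumes "0 < k" and "(rho ^^ k) w = []"
  shows "vanishing_order w \<le> k"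
  unfolding vanishing_order_def by (rule Least_le) (use assms in blast)

lemma less_two_power_floor_log:
  fixes n :: nat
  assumes "0 < n"
  shows "n < 2 ^ (nat \<lfloor>log 2 (real n)\<rfloor> + 1)"
proof -
  have "\<lfloor>log 2 (real n)\<rfloor> \<ge> 0"
    using assms by simp
  then have "\<lfloor>log 2 (real n)\<rfloor> = int (nat \<lfloor>log 2 (real n)\<rfloor>)"
    by simp
  then show ?thesis
    using floor_log_nat_eq_powr_iff[of 2 n "nat \<lfloor>log 2 (real n)\<rfloor>"] assms by simp
qed

theorem proposition2p1:
  fixes w :: "bool list"
  assumes "w \<noteq> []"
  shows "(\<exists>k>0. (rho ^^ k) w = []) \<and>
         int (vanishing_order w) \<le> 2 * \<lfloor>log 2 (real (length w))\<rfloor> + 2"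
proof -
  define f where "f = \<lfloor>log 2 (real (length w))\<rfloor>"
  define k where "k = nat f + 1"
  have "f \<ge> 0"
    using assms by (simp add: f_def Suc_leI)
  have "length w < 2 ^ k"
    unfolding k_def f_def by (rule less_two_power_floor_log) (use assms in simp)
  then have vanishes: "(rho ^^ (2 * k)) w = []"
    by (rule funpow_rho_eq_Nil_if_length_less)
  have "0 < 2 * k"
    by (simp add: k_def)
  then have "vanishing_order w \<le> 2 * k"
    using vanishes by (rule vanishing_order_le)
  then have "int (vanishing_order w) \<le> 2 * f + 2"
    using \<open>f \<ge> 0\<close> by (simp add: k_def)
  with vanishes \<open>0 < 2 * k\<close> show ?thesis
    unfolding f_def by blast
qed

end
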